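(* Let $a_{n,0}$ denote the number of matchings of size $n$ with no occurrence of the endhered pattern $21$. For any $n\ge0$, $$a_{n+1,0}=\sum_{k=0}^{n}(-1)^{n-k}\binom{n}{k}(2k+1)!!,$$ where $m!!$ is the double factorial ($m(m-2)(m-4)\cdots$ down to $2$ or $1$).
   Context: A matching of size $n$ is a set of $n$ arcs $(a,b)$ with $1\le a<b\le 2n$ such that each point of $\{1,\dots,2n\}$ belongs to exactly one arc. An occurrence of the endhered pattern $21$ in a matching $\mu$ is a pair of arcs of $\mu$ of the form $(i+1,j+2),(i+2,j+1)$ (two nested arcs with consecutive starting points and consecutive ending points). *)

theory Defs
  imports Main
begin

definition is_matching :: "nat \<Rightarrow> (nat \<times> nat) set \<Rightarrow> bool" where
  "is_matching n \<mu> \<longleftrightarrow>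
     (\<forall>(a,b)\<in>\<mu>. 1 \<le> a \<and> a < b \<and> b \<le> 2*n) \<and>
     (\<forall>p\<in>{1..2*n}. \<exists>!e\<in>\<mu>. fst e = p \<or> snd e = p)"

definition has_endhered_21 :: "(nat \<times> nat) set \<Rightarrow> bool" where
  "has_endhered_21 \<mu> \<longleftrightarrow> (\<exists>i j. (i+1, j+2) \<in> \<mu> \<and> (i+2, j+1) \<in> \<mu>)"

definition a0 :: "nat \<Rightarrow> nat" where
  "a0 n = card {\<mu>. is_matching n \<mu> \<and> \<not> has_endhered_21 \<mu>}"

fun dfact :: "nat \<Rightarrow> nat" where
  "dfact 0 = 1"
| "dfact (Suc 0) = 1"
| "dfact (Suc (Suc m)) = Suc (Suc m) * dfact m"

end

theory Submission
  imports Defs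
begin

text \<open>Deleting the inner arc of an occurrence of 21 from a matching of size n + 1 and closing up
  the two gaps yields a matching of size n with exactly one occurrence fewer, in which the outer arc
  of the deleted occurrence is a distinguished arc; nesting a new arc directly inside a
  distinguished arc reverses this. Counting these pairs in two ways gives
  (j + 1) a_{n+1,j+1} = n a_{n,j} for the number a_{n,j} of matchings of size n with j
  occurrences, hence a_{n+1,j} = C(n,j) a_{n+1-j,0}. Summing over j, the (2n + 1)!! matchings of
  size n + 1 satisfy (2n + 1)!! = sum_k C(n,k) a_{k+1,0}, and binomial inversion gives the
  theorem.\<close>

lemma matching_arc_bounds:
  "is_matching n \<mu> \<Longrightarrow> (a, b) \<in> \<mu> \<Longrightarrow> 1 \<le> a \<and> a < b \<and> b \<le> 2 * n"
  unfolding is_matching_def by blast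

lemma matching_covers:
  assumes "is_matching n \<mu>" "x \<in> {1..2 * n}"
  shows "\<exists>a b. (a, b) \<in> \<mu> \<and> x \<in> {a, b}"
proof -
  obtain e where "e \<in> \<mu>" "fst e = x \<or> snd e = x"
    using assms unfolding is_matching_def by blast
  then show ?thesis
    by (intro exI[of _ "fst e"] exI[of _ "snd e"]) auto
qed

lemma matching_arc_unique:
  assumes "is_matching n \<mu>" "(a, b) \<in> \<mu>" "(c, d) \<in> \<mu>" "x \<in> {a, b}" "x \<in> {c, d}"
  shows "(a, b) = (c, d)"
proof -
  have "x \<in> {1..2 * n}"
    using assms(1,2,4) by (auto dest: matching_arc_bounds)
  then have "\<exists>!e\<in>\<mu>. fst e = x \<or> snd e = x"
    using assms(1) unfolding is_matching_def by blast
  moreover have "fst (a, b) = x \<or> snd (a, b) = x" "fst (c, d) = x \<or> snd (c, d) = x"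
    using assms(4,5) by auto
  ultimately show ?thesis
    using assms(2,3) by blast
qed

lemma matching_arcs_disjoint:
  "is_matching n \<mu> \<Longrightarrow> (a, b) \<in> \<mu> \<Longrightarrow> (c, d) \<in> \<mu> \<Longrightarrow> (a, b) \<noteq> (c, d) \<Longrightarrow>
    a \<noteq> c \<and> a \<noteq> d \<and> b \<noteq> c \<and> b \<noteq> d"
  using matching_arc_unique[of n \<mu> a b c d] by auto

lemma is_matchingI:
  assumes "\<And>a b. (a, b) \<in> \<mu> \<Longrightarrow> 1 \<le> a \<and> a < b \<and> b \<le> 2 * n"
    and "\<And>x. x \<in> {1..2 * n} \<Longrightarrow> \<exists>a b. (a, b) \<in> \<mu> \<and> x \<in> {a, b}"
    and "\<And>a b c d x. (a, b) \<in> \<mu> \<Longrightarrow> (c, d) \<in> \<mu> \<Longrightarrow> x \<in> {a, b} \<Longrightarrow> x \<in> {c, d} \<Longrightarrow>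
      (a, b) = (c, d)"
  shows "is_matching n \<mu>"
  unfolding is_matching_def
proof (intro conjI ballI)
  fix x assume "x \<in> {1..2 * n}"
  then obtain a b where "(a, b) \<in> \<mu>" "x \<in> {a, b}"
    using assms(2) by blast
  show "\<exists>!e\<in>\<mu>. fst e = x \<or> snd e = x"
  proof (rule ex1I[of _ "(a, b)"])
    fix e assume "e \<in> \<mu> \<and> (fst e = x \<or> snd e = x)"
    then show "e = (a, b)"
      using assms(3)[of "fst e" "snd e" a b x] \<open>(a, b) \<in> \<mu>\<close> \<open>x \<in> {a, b}\<close> by auto
  qed (use \<open>(a, b) \<in> \<mu>\<close> \<open>x \<in> {a, b}\<close> in auto)
qed (use assms(1) in blast)

lemma matching_subset:
  assumes "is_matching n \<mu>"
  shows "\<mu> \<subseteq> {1..2 * n} \<times> {1..2 * n}"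
proof
  fix e assume "e \<in> \<mu>"
  then have "1 \<le> fst e \<and> fst e < snd e \<and> snd e \<le> 2 * n"
    using matching_arc_bounds[OF assms, of "fst e" "snd e"] by simp
  then show "e \<in> {1..2 * n} \<times> {1..2 * n}"
    by (simp add: mem_Times_iff)
qed

lemma finite_matching: "is_matching n \<mu> \<Longrightarrow> finite \<mu>"
  using matching_subset finite_subset by blast

lemma finite_matchings: "finite {\<mu>. is_matching n \<mu>}"
proof (rule finite_subset)
  show "{\<mu>. is_matching n \<mu>} \<subseteq> Pow ({1..2 * n} \<times> {1..2 * n})"
    using matching_subset by blast
qed simp

section \<open>Deleting and inserting an arc\<close>

text \<open>For \<open>p < q\<close>, \<open>skip p q\<close> is the increasing bijection from \<open>\<nat>\<close> onto \<open>\<nat> - {p, q}\<close>;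
  it relabels the points of a matching of size \<open>n\<close> by those of \<open>{1..2n+2} - {p, q}\<close>.\<close>
definition skip :: "nat \<Rightarrow> nat \<Rightarrow> nat \<Rightarrow> nat" where
  "skip p q y = (if y < p then y else if y + 1 < q then y + 1 else y + 2)"

definition skip_arc :: "nat \<Rightarrow> nat \<Rightarrow> nat \<times> nat \<Rightarrow> nat \<times> nat" where
  "skip_arc p q = map_prod (skip p q) (skip p q)"

definition insert_arc :: "nat \<Rightarrow> nat \<Rightarrow> (nat \<times> nat) set \<Rightarrow> (nat \<times> nat) set" where
  "insert_arc p q \<nu> = insert (p, q) (skip_arc p q ` \<nu>)"

definition delete_arc :: "nat \<Rightarrow> nat \<Rightarrow> (nat \<times> nat) set \<Rightarrow> (nat \<times> nat) set" where
  "delete_arc p q \<mu> = skip_arc p q -` (\<mu> - {(p, q)})"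

lemma skip_neq: "p < q \<Longrightarrow> skip p q y \<noteq> p \<and> skip p q y \<noteq> q"
  by (simp add: skip_def)

lemma skip_less_iff: "p < q \<Longrightarrow> skip p q y < skip p q y' \<longleftrightarrow> y < y'"
  by (auto simp: skip_def)

lemma inj_skip: "p < q \<Longrightarrow> inj (skip p q)"
  by (metis injI linorder_neq_iff skip_less_iff)

lemma inj_skip_arc: "p < q \<Longrightarrow> inj (skip_arc p q)"
  by (simp add: skip_arc_def inj_skip prod.inj_map)

lemma skip_surj: "p < q \<Longrightarrow> x \<noteq> p \<Longrightarrow> x \<noteq> q \<Longrightarrow> \<exists>y. skip p q y = x"
  by (rule exI[of _ "if x < p then x else if x < q then x - 1 else x - 2"]) (auto simp: skip_def)

lemma skip_bounds_iff:
  "1 \<le> p \<Longrightarrow> p < q \<Longrightarrow> q \<le> 2 * n + 2 \<Longrightarrow>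
    1 \<le> skip p q y \<and> skip p q y \<le> 2 * n + 2 \<longleftrightarrow> 1 \<le> y \<and> y \<le> 2 * n"
  by (auto simp: skip_def)

lemma skip_Suc:
  "p < q \<Longrightarrow> skip p q (Suc y) =
    (let x = skip p q y in if x + 1 = p then (if x + 2 = q then x + 3 else x + 2)
      else if x + 1 = q then x + 2 else x + 1)"
  by (auto simp: skip_def Let_def)

lemma skip_pred:
  "p < q \<Longrightarrow> 0 < y \<Longrightarrow> skip p q (y - 1) =
    (let x = skip p q y in if x - 1 = q then (if x - 2 = p then x - 3 else x - 2)
      else if x - 1 = p then x - 2 else x - 1)"
  by (auto simp: skip_def Let_def)

lemma skip_arc_nested: "a + 1 < b - 1 \<Longrightarrow> skip_arc (a + 1) (b - 1) (a, b - 2) = (a, b)"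
  by (auto simp: skip_arc_def skip_def)

lemma mem_delete_arc_iff: "(x, y) \<in> delete_arc p q \<mu> \<longleftrightarrow> (skip p q x, skip p q y) \<in> \<mu> - {(p, q)}"
  by (simp add: delete_arc_def skip_arc_def)

lemma matching_delete_arc:
  assumes M: "is_matching (Suc n) \<mu>" and pq: "(p, q) \<in> \<mu>"
  shows "is_matching n (delete_arc p q \<mu>)"
proof -
  have r: "1 \<le> p" "p < q" "q \<le> 2 * n + 2"
    using matching_arc_bounds[OF M pq] by auto
  show ?thesis
  proof (rule is_matchingI)
    fix a b assume "(a, b) \<in> delete_arc p q \<mu>"
    then have "(skip p q a, skip p q b) \<in> \<mu>"
      by (simp add: mem_delete_arc_iff)
    then have "1 \<le> skip p q a \<and> skip p q a < skip p q b \<and> skip p q b \<le> 2 * n + 2"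
      using matching_arc_bounds[OF M] by simp
    moreover from this have "1 \<le> a" "b \<le> 2 * n"
      using skip_bounds_iff[OF r, of a] skip_bounds_iff[OF r, of b] by simp_all
    ultimately show "1 \<le> a \<and> a < b \<and> b \<le> 2 * n"
      using skip_less_iff[OF r(2)] by simp
  next
    fix x assume "x \<in> {1..2 * n}"
    then have "skip p q x \<in> {1..2 * Suc n}"
      using skip_bounds_iff[OF r] by simp
    then obtain a b where ab: "(a, b) \<in> \<mu>" "skip p q x \<in> {a, b}"
      using matching_covers[OF M] by blast
    then have "(a, b) \<noteq> (p, q)"
      using skip_neq[OF r(2)] by auto
    then obtain a' b' where "skip p q a' = a" "skip p q b' = b"
      using matching_arcs_disjoint[OF M ab(1) pq] skip_surj[OF r(2)] by metis
    with ab \<open>(a, b) \<noteq> (p, q)\<close> have "(a', b') \<in> delete_arc p q \<mu> \<and> x \<in> {a', b'}"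
      by (auto simp: mem_delete_arc_iff inj_eq[OF inj_skip[OF r(2)]])
    then show "\<exists>a b. (a, b) \<in> delete_arc p q \<mu> \<and> x \<in> {a, b}"
      by blast
  next
    fix a b c d x
    assume "(a, b) \<in> delete_arc p q \<mu>" "(c, d) \<in> delete_arc p q \<mu>" "x \<in> {a, b}" "x \<in> {c, d}"
    then have "(skip p q a, skip p q b) = (skip p q c, skip p q d)"
      by (intro matching_arc_unique[OF M, of _ _ _ _ "skip p q x"]) (auto simp: mem_delete_arc_iff)
    then show "(a, b) = (c, d)"
      by (simp add: inj_eq[OF inj_skip[OF r(2)]])
  qed
qed

lemma matching_insert_arc:
  assumes N: "is_matching n \<nu>" and r: "1 \<le> p" "p < q" "q \<le> 2 * n + 2"
  shows "is_matching (Suc n) (insert_arc p q \<nu>)"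
proof (rule is_matchingI)
  fix a b assume "(a, b) \<in> insert_arc p q \<nu>"
  then consider "(a, b) = (p, q)" | a' b' where "(a', b') \<in> \<nu>" "a = skip p q a'" "b = skip p q b'"
    unfolding insert_arc_def skip_arc_def by auto
  then show "1 \<le> a \<and> a < b \<and> b \<le> 2 * Suc n"
  proof cases
    case 2
    then show ?thesis
      using matching_arc_bounds[OF N 2(1)] skip_bounds_iff[OF r, of a'] skip_bounds_iff[OF r, of b']
        skip_less_iff[OF r(2), of a' b'] by simp
  qed (use r in simp)
next
  fix x assume x: "x \<in> {1..2 * Suc n}"
  show "\<exists>a b. (a, b) \<in> insert_arc p q \<nu> \<and> x \<in> {a, b}"
  proof (cases "x = p \<or> x = q")
    case False
    then obtain y where y: "skip p q y = x"
      using skip_surj[OF r(2)] by blast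
    then have "y \<in> {1..2 * n}"
      using skip_bounds_iff[OF r, of y] x by simp
    then obtain a b where "(a, b) \<in> \<nu>" "y \<in> {a, b}"
      using matching_covers[OF N] by blast
    then show ?thesis
      using y unfolding insert_arc_def skip_arc_def
      by (intro exI[of _ "skip p q a"] exI[of _ "skip p q b"]) auto
  qed (auto simp: insert_arc_def)
next
  fix a b c d x
  assume ab: "(a, b) \<in> insert_arc p q \<nu>" and cd: "(c, d) \<in> insert_arc p q \<nu>"
    and x: "x \<in> {a, b}" "x \<in> {c, d}"
  have new_arc: "e = (p, q)" if "e \<in> insert_arc p q \<nu>" "x \<in> {fst e, snd e}" "x \<in> {p, q}" for e
    using that skip_neq[OF r(2)] unfolding insert_arc_def skip_arc_def by auto
  show "(a, b) = (c, d)"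
  proof (cases "x \<in> {p, q}")
    case True
    then show ?thesis
      using new_arc[OF ab] new_arc[OF cd] x by simp
  next
    case False
    then obtain a' b' c' d' where "(a', b') \<in> \<nu>" "(c', d') \<in> \<nu>"
      and ab': "(a, b) = (skip p q a', skip p q b')" and cd': "(c, d) = (skip p q c', skip p q d')"
      using ab cd x unfolding insert_arc_def skip_arc_def by auto
    moreover obtain y where "skip p q y = x"
      using False skip_surj[OF r(2)] by blast
    ultimately have "(a', b') = (c', d')"
      using x inj_skip[OF r(2)] by (intro matching_arc_unique[OF N, of _ _ _ _ y]) (auto dest: injD)
    then show ?thesis
      using ab' cd' by simp
  qed
qed

lemma delete_insert_arc:
  assumes "p < q"
  shows "delete_arc p q (insert_arc p q \<nu>) = \<nu>"
proof -
  have "insert_arc p q \<nu> - {(p, q)} = skip_arc p q ` \<nu>"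
    using skip_neq[OF assms] by (auto simp: insert_arc_def skip_arc_def)
  then show ?thesis
    by (simp add: delete_arc_def inj_vimage_image_eq inj_skip_arc[OF assms])
qed

lemma skip_arc_image_delete_arc:
  assumes M: "is_matching n \<mu>" and pq: "(p, q) \<in> \<mu>"
  shows "skip_arc p q ` delete_arc p q \<mu> = \<mu> - {(p, q)}"
proof -
  have "p < q"
    using matching_arc_bounds[OF M pq] by simp
  have "(a, b) \<in> range (skip_arc p q)" if ab: "(a, b) \<in> \<mu>" "(a, b) \<noteq> (p, q)" for a b
  proof -
    obtain a' b' where "skip p q a' = a" "skip p q b' = b"
      using matching_arcs_disjoint[OF M ab(1) pq ab(2)] skip_surj[OF \<open>p < q\<close>] by metis
    then show ?thesis
      by (auto simp: skip_arc_def)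
  qed
  then have "\<mu> - {(p, q)} \<subseteq> range (skip_arc p q)"
    by auto
  then show ?thesis
    unfolding delete_arc_def by (simp add: image_vimage_eq Int_absorb2)
qed

lemma insert_delete_arc:
  "is_matching n \<mu> \<Longrightarrow> (p, q) \<in> \<mu> \<Longrightarrow> insert_arc p q (delete_arc p q \<mu>) = \<mu>"
  by (simp add: insert_arc_def skip_arc_image_delete_arc insert_absorb)

lemma bij_betw_delete_arc:
  assumes "1 \<le> p" "p < q" "q \<le> 2 * n + 2"
  shows "bij_betw (delete_arc p q) {\<mu>. is_matching (Suc n) \<mu> \<and> (p, q) \<in> \<mu>} {\<nu>. is_matching n \<nu>}"
proof (rule bij_betw_byWitness[where f' = "insert_arc p q"])
  show "\<forall>\<mu>\<in>{\<mu>. is_matching (Suc n) \<mu> \<and> (p, q) \<in> \<mu>}. insert_arc p q (delete_arc p q \<mu>) = \<mu>"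
    using insert_delete_arc by blast
  show "\<forall>\<nu>\<in>{\<nu>. is_matching n \<nu>}. delete_arc p q (insert_arc p q \<nu>) = \<nu>"
    using delete_insert_arc[OF assms(2)] by blast
  show "delete_arc p q ` {\<mu>. is_matching (Suc n) \<mu> \<and> (p, q) \<in> \<mu>} \<subseteq> {\<nu>. is_matching n \<nu>}"
    using matching_delete_arc by blast
  show "insert_arc p q ` {\<nu>. is_matching n \<nu>} \<subseteq> {\<mu>. is_matching (Suc n) \<mu> \<and> (p, q) \<in> \<mu>}"
    using matching_insert_arc[OF _ assms] by (auto simp: insert_arc_def)
qed

section \<open>The number of matchings\<close>

lemma card_insert_arc:
  assumes "p < q" "finite \<nu>"
  shows "card (insert_arc p q \<nu>) = Suc (card \<nu>)"
proof -
  have "(p, q) \<notin> skip_arc p q ` \<nu>"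
    using skip_neq[OF assms(1)] by (auto simp: skip_arc_def dest: sym)
  then show ?thesis
    using assms inj_skip_arc[OF assms(1)]
    by (simp add: insert_arc_def card_image inj_on_subset[of _ UNIV])
qed

lemma matching_first_arc:
  assumes "is_matching (Suc n) \<mu>"
  obtains q where "q \<in> {2..2 * n + 2}" "(1, q) \<in> \<mu>"
proof -
  obtain a b where ab: "(a, b) \<in> \<mu>" "1 \<in> {a, b}"
    using matching_covers[OF assms, of 1] by auto
  then have "a = 1" "b \<in> {2..2 * n + 2}"
    using matching_arc_bounds[OF assms ab(1)] by auto
  then show thesis
    using that ab(1) by blast
qed

lemma card_matching: "is_matching n \<mu> \<Longrightarrow> card \<mu> = n"
proof (induction n arbitrary: \<mu>)
  case 0
  then have "\<mu> = {}"
    using matching_subset[OF 0] by simp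
  then show ?case
    by simp
next
  case (Suc n)
  then obtain q where q: "q \<in> {2..2 * n + 2}" "(1, q) \<in> \<mu>"
    by (blast elim: matching_first_arc)
  have "card \<mu> = card (insert_arc 1 q (delete_arc 1 q \<mu>))"
    using insert_delete_arc[OF Suc.prems q(2)] by simp
  also have "\<dots> = Suc n"
    using q(1) matching_delete_arc[OF Suc.prems q(2)] Suc.IH
    by (simp add: card_insert_arc finite_matching)
  finally show ?case .
qed

lemma card_matchings_Suc:
  "card {\<mu>. is_matching (Suc n) \<mu>} = (2 * n + 1) * card {\<nu>. is_matching n \<nu>}"
proof -
  define B where "B q = {\<mu>. is_matching (Suc n) \<mu> \<and> (1, q) \<in> \<mu>}" for q
  have "{\<mu>. is_matching (Suc n) \<mu>} = (\<Union>q\<in>{2..2 * n + 2}. B q)"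
    unfolding B_def by (blast elim: matching_first_arc)
  moreover have "B q \<inter> B q' = {}" if "q \<noteq> q'" for q q'
    using that matching_arc_unique[of "Suc n" _ 1 q 1 q' 1] unfolding B_def by blast
  moreover have "finite (B q)" for q
    using finite_matchings[of "Suc n"] unfolding B_def by (rule finite_subset[rotated]) auto
  ultimately have "card {\<mu>. is_matching (Suc n) \<mu>} = (\<Sum>q\<in>{2..2 * n + 2}. card (B q))"
    by (simp add: card_UN_disjoint)
  also have "\<dots> = (\<Sum>q\<in>{2..2 * n + 2}. card {\<nu>. is_matching n \<nu>})"
    unfolding B_def by (intro sum.cong refl bij_betw_same_card[OF bij_betw_delete_arc]) auto
  finally show ?thesis
    by simp
qed

lemma card_matchings: "card {\<mu>. is_matching (Suc n) \<mu>} = dfact (2 * n + 1)"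
proof (induction n)
  case 0
  have "is_matching 0 \<mu> \<longleftrightarrow> \<mu> = {}" for \<mu>
    using matching_subset[of 0 \<mu>] by (auto intro: is_matchingI)
  then have "{\<mu>. is_matching 0 \<mu>} = {{}}"
    by blast
  then show ?case
    using card_matchings_Suc[of 0] by simp
next
  case (Suc n)
  then show ?case
    using card_matchings_Suc[of "Suc n"] by (simp add: numeral_2_eq_2)
qed

section \<open>Occurrences of 21\<close>

text \<open>An occurrence \<open>(a, b), (a + 1, b - 1)\<close> of \<open>21\<close> is recorded by its outer arc \<open>(a, b)\<close>.\<close>
definition occ21 :: "(nat \<times> nat) set \<Rightarrow> (nat \<times> nat) set" where
  "occ21 \<mu> = {(a, b) \<in> \<mu>. (a + 1, b - 1) \<in> \<mu>}"

lemma occ21_subset: "occ21 \<mu> \<subseteq> \<mu>"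
  by (auto simp: occ21_def)

lemma finite_occ21: "is_matching n \<mu> \<Longrightarrow> finite (occ21 \<mu>)"
  using finite_matching occ21_subset by (rule finite_subset[rotated])

lemma has_endhered_21_iff_occ21:
  assumes "is_matching n \<mu>"
  shows "has_endhered_21 \<mu> \<longleftrightarrow> occ21 \<mu> \<noteq> {}"
proof
  assume "has_endhered_21 \<mu>"
  then obtain i j where "(i + 1, j + 2) \<in> \<mu>" "(i + 2, j + 1) \<in> \<mu>"
    unfolding has_endhered_21_def by blast
  then have "(i + 1, j + 2) \<in> occ21 \<mu>"
    by (simp add: occ21_def numeral_2_eq_2)
  then show "occ21 \<mu> \<noteq> {}"
    by blast
next
  assume "occ21 \<mu> \<noteq> {}"
  then obtain a b where ab: "(a, b) \<in> \<mu>" "(a + 1, b - 1) \<in> \<mu>"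
    unfolding occ21_def by auto
  moreover have "1 \<le> a" "a + 1 < b - 1"
    using matching_arc_bounds[OF assms ab(1)] matching_arc_bounds[OF assms ab(2)] by auto
  then have "a - 1 + 1 = a" "b - 2 + 2 = b" "a - 1 + 2 = a + 1" "b - 2 + 1 = b - 1"
    by auto
  ultimately have "(a - 1 + 1, b - 2 + 2) \<in> \<mu> \<and> (a - 1 + 2, b - 2 + 1) \<in> \<mu>"
    by simp
  then show "has_endhered_21 \<mu>"
    unfolding has_endhered_21_def by blast
qed

lemma occ21_delete_arc_outer:
  assumes M: "is_matching n \<mu>" and ab: "(a, b) \<in> occ21 \<mu>"
  shows "(a, b - 2) \<in> occ21 (delete_arc (a + 1) (b - 1) \<mu>) \<longleftrightarrow> (a + 1, b - 1) \<in> occ21 \<mu>"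
proof -
  let ?s = "skip (a + 1) (b - 1)"
  have arcs: "(a, b) \<in> \<mu>" "(a + 1, b - 1) \<in> \<mu>"
    using ab by (auto simp: occ21_def)
  have r: "a + 1 < b - 1"
    using matching_arc_bounds[OF M arcs(2)] by simp
  have "(a, b - 2) \<in> occ21 (delete_arc (a + 1) (b - 1) \<mu>) \<longleftrightarrow>
      (?s a, ?s (b - 2)) \<in> \<mu> - {(a + 1, b - 1)} \<and> (?s (a + 1), ?s (b - 3)) \<in> \<mu> - {(a + 1, b - 1)}"
    by (simp add: occ21_def mem_delete_arc_iff numeral_3_eq_3 numeral_2_eq_2)
  also have "(?s a, ?s (b - 2)) = (a, b)"
    using r by (auto simp: skip_def)
  finally have occ_iff: "(a, b - 2) \<in> occ21 (delete_arc (a + 1) (b - 1) \<mu>) \<longleftrightarrow>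
      (?s (a + 1), ?s (b - 3)) \<in> \<mu> - {(a + 1, b - 1)}"
    using arcs r by auto
  show ?thesis
  proof (cases "a + 3 < b")
    case True
    then have "(?s (a + 1), ?s (b - 3)) = (a + 2, b - 2)"
      by (auto simp: skip_def)
    then show ?thesis
      using occ_iff arcs by (auto simp: occ21_def numeral_2_eq_2)
  next
    case False
    then have "b = a + 3" "(?s (a + 1), ?s (b - 3)) = (a + 3, a)"
      using r by (auto simp: skip_def)
    moreover have "(a + 3, a) \<notin> \<mu>" "(a + 2, a + 1) \<notin> \<mu>"
      using matching_arc_bounds[OF M] by force+
    ultimately show ?thesis
      using occ_iff arcs by (auto simp: occ21_def numeral_2_eq_2)
  qed
qed

lemma occ21_delete_arc_other:
  assumes M: "is_matching n \<mu>" and ab: "(a, b) \<in> occ21 \<mu>"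
    and uv: "(skip (a + 1) (b - 1) x, skip (a + 1) (b - 1) y) \<in> \<mu>"
    and ne: "(skip (a + 1) (b - 1) x, skip (a + 1) (b - 1) y) \<noteq> (a, b)"
  shows "(x, y) \<in> occ21 (delete_arc (a + 1) (b - 1) \<mu>) \<longleftrightarrow>
    (skip (a + 1) (b - 1) x, skip (a + 1) (b - 1) y) \<in> occ21 \<mu>"
proof -
  define p q where "p = a + 1" and "q = b - 1"
  define u v where "u = skip p q x" and "v = skip p q y"
  have arcs: "(a, b) \<in> \<mu>" "(p, q) \<in> \<mu>"
    using ab by (auto simp: occ21_def p_def q_def)
  have r: "p < q" "a < b"
    using matching_arc_bounds[OF M arcs(2)] matching_arc_bounds[OF M arcs(1)] by auto
  have uv': "(u, v) \<in> \<mu>" "(u, v) \<noteq> (a, b)"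
    using uv ne by (simp_all add: u_def v_def p_def q_def)
  have "u \<noteq> a" "u \<noteq> b" "v \<noteq> a" "v \<noteq> b" "u \<noteq> p" "v \<noteq> q"
    using matching_arcs_disjoint[OF M uv'(1) arcs(1) uv'(2)] skip_neq[OF r(1)] by (auto simp: u_def v_def)
  moreover have "u < v"
    using matching_arc_bounds[OF M uv'(1)] by simp
  moreover have "0 < y"
    using \<open>u < v\<close> skip_less_iff[OF r(1)] by (auto simp: u_def v_def)
  ultimately have "u + 1 \<noteq> p" "v - 1 \<noteq> q"
    using r by (auto simp: p_def q_def)
  then have succ: "skip p q (Suc x) = (if u + 1 = q then u + 2 else u + 1)"
    and pred: "skip p q (y - 1) = (if v - 1 = p then v - 2 else v - 1)"
    using skip_Suc[OF r(1), of x, folded u_def] skip_pred[OF r(1) \<open>0 < y\<close>, folded v_def]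
    by (simp_all add: Let_def)
  have no_start_b: "(b, w) \<notin> \<mu>" and no_end_a: "(w, a) \<notin> \<mu>" for w
    using matching_arc_unique[OF M arcs(1)] r(2) by blast+
  have "(x, y) \<in> occ21 (delete_arc p q \<mu>) \<longleftrightarrow> (skip p q (Suc x), skip p q (y - 1)) \<in> \<mu> - {(p, q)}"
    using uv' \<open>u \<noteq> p\<close> by (simp add: occ21_def mem_delete_arc_iff u_def v_def)
  also have "\<dots> \<longleftrightarrow> (u + 1, v - 1) \<in> \<mu>"
  proof (cases "u + 1 = q")
    case True
    then have "skip p q (Suc x) = b"
      using succ r(2) by (simp add: q_def)
    moreover have "(u + 1, v - 1) \<notin> \<mu>"
    proof
      assume "(u + 1, v - 1) \<in> \<mu>"
      then have "(u + 1, v - 1) = (p, q)"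
        using matching_arc_unique[OF M _ arcs(2), of "u + 1" "v - 1" q] True by simp
      then show False
        using \<open>v \<noteq> b\<close> \<open>u < v\<close> r(2) by (auto simp: q_def)
    qed
    ultimately show ?thesis
      using no_start_b by simp
  next
    case u: False
    show ?thesis
    proof (cases "v - 1 = p")
      case True
      then have "skip p q (y - 1) = a"
        using pred by (simp add: p_def)
      moreover have "(u + 1, v - 1) \<notin> \<mu>"
      proof
        assume "(u + 1, v - 1) \<in> \<mu>"
        then have "(u + 1, v - 1) = (p, q)"
          using matching_arc_unique[OF M _ arcs(2), of "u + 1" "v - 1" p] True by simp
        then show False
          using \<open>u \<noteq> a\<close> by (simp add: p_def)
      qed
      ultimately show ?thesis
        using no_end_a by simp
    next
      case False
      then show ?thesis
        using succ pred u \<open>u + 1 \<noteq> p\<close> by simp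
    qed
  qed
  also have "\<dots> \<longleftrightarrow> (u, v) \<in> occ21 \<mu>"
    using uv' by (simp add: occ21_def)
  finally show ?thesis
    by (simp add: u_def v_def p_def q_def)
qed

text \<open>If the inner arc \<open>(a + 1, b - 1)\<close> is itself the outer arc of an occurrence, that
  occurrence is lost and \<open>(a, b)\<close> survives as \<open>(a, b - 2)\<close>; otherwise the occurrence \<open>(a, b)\<close>
  is lost.\<close>
lemma occ21_delete_arc_iff:
  assumes M: "is_matching n \<mu>" and ab: "(a, b) \<in> occ21 \<mu>"
    and xy: "skip_arc (a + 1) (b - 1) (x, y) \<in> \<mu> - {(a + 1, b - 1)}"
  shows "(x, y) \<in> occ21 (delete_arc (a + 1) (b - 1) \<mu>) \<longleftrightarrow> skip_arc (a + 1) (b - 1) (x, y) \<in>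
    occ21 \<mu> - {if (a + 1, b - 1) \<in> occ21 \<mu> then (a + 1, b - 1) else (a, b)}"
proof (cases "skip_arc (a + 1) (b - 1) (x, y) = (a, b)")
  case True
  have "a + 1 < b - 1"
    using ab matching_arc_bounds[OF M, of "a + 1" "b - 1"] by (simp add: occ21_def)
  then have "(x, y) = (a, b - 2)"
    using True skip_arc_nested inj_skip_arc by (metis injD)
  then show ?thesis
    using True ab occ21_delete_arc_outer[OF M ab] by auto
next
  case False
  then show ?thesis
    using xy occ21_delete_arc_other[OF M ab, of x y] by (auto simp: skip_arc_def)
qed

lemma card_occ21_delete_arc:
  assumes M: "is_matching n \<mu>" and ab: "(a, b) \<in> occ21 \<mu>"
  shows "card (occ21 \<mu>) = Suc (card (occ21 (delete_arc (a + 1) (b - 1) \<mu>)))"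
proof -
  define p q where "p = a + 1" and "q = b - 1"
  define lost where "lost = (if (p, q) \<in> occ21 \<mu> then (p, q) else (a, b))"
  let ?D = "delete_arc p q \<mu>"
  have pq: "(p, q) \<in> \<mu>"
    using ab by (auto simp: occ21_def p_def q_def)
  have inj: "inj (skip_arc p q)"
    using inj_skip_arc matching_arc_bounds[OF M pq] by simp
  have iff: "z \<in> occ21 ?D \<longleftrightarrow> skip_arc p q z \<in> occ21 \<mu> - {lost}"
    if "skip_arc p q z \<in> \<mu> - {(p, q)}" for z
    using that occ21_delete_arc_iff[OF M ab, of "fst z" "snd z"] by (simp add: lost_def p_def q_def)
  have "skip_arc p q ` occ21 ?D = occ21 \<mu> - {lost}"
  proof (intro equalityI subsetI)
    fix e assume "e \<in> skip_arc p q ` occ21 ?D"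
    then obtain z where "z \<in> occ21 ?D" "e = skip_arc p q z"
      by blast
    moreover from this have "skip_arc p q z \<in> \<mu> - {(p, q)}"
      using occ21_subset unfolding delete_arc_def by blast
    ultimately show "e \<in> occ21 \<mu> - {lost}"
      using iff by blast
  next
    fix e assume e: "e \<in> occ21 \<mu> - {lost}"
    then have "e \<in> \<mu> - {(p, q)}"
      using occ21_subset by (auto simp: lost_def split: if_splits)
    then obtain z where "z \<in> ?D" "e = skip_arc p q z"
      using skip_arc_image_delete_arc[OF M pq] by blast
    then show "e \<in> skip_arc p q ` occ21 ?D"
      using iff e unfolding delete_arc_def by blast
  qed
  then have "card (occ21 ?D) = card (occ21 \<mu> - {lost})"
    using inj by (metis card_image inj_on_subset subset_UNIV)
  moreover have "lost \<in> occ21 \<mu>" "finite (occ21 \<mu>)"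
    using ab finite_occ21[OF M] by (auto simp: lost_def)
  ultimately show ?thesis
    unfolding p_def q_def by (metis card_Suc_Diff1)
qed

lemma occ21_insert_arc:
  assumes N: "is_matching n \<nu>" and cd: "(c, d) \<in> \<nu>"
  shows "(c, d + 2) \<in> occ21 (insert_arc (c + 1) (d + 1) \<nu>)"
proof -
  have "c < d"
    using matching_arc_bounds[OF N cd] by simp
  then have "skip_arc (c + 1) (d + 1) (c, d) = (c, d + 2)"
    by (simp add: skip_arc_def skip_def)
  then have "(c, d + 2) \<in> insert_arc (c + 1) (d + 1) \<nu>"
    using cd unfolding insert_arc_def by (metis imageI insertCI)
  then show ?thesis
    by (simp add: occ21_def insert_arc_def)
qed

lemma bij_betw_delete_inner_arc:
  "bij_betw (\<lambda>(\<mu>, (a, b)). (delete_arc (a + 1) (b - 1) \<mu>, (a, b - 2)))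
    (SIGMA \<mu>:{\<mu>. is_matching (Suc n) \<mu>}. occ21 \<mu>) (SIGMA \<nu>:{\<nu>. is_matching n \<nu>}. \<nu>)"
  (is "bij_betw ?F ?X ?Y")
proof (rule bij_betw_byWitness[where f' = "\<lambda>(\<nu>, (c, d)). (insert_arc (c + 1) (d + 1) \<nu>, (c, d + 2))"])
  let ?G = "\<lambda>(\<nu>, (c, d)). (insert_arc (c + 1) (d + 1) \<nu>, (c, d + 2))"
  have inner: "a + 1 < b - 1" "(a, b) \<in> \<mu>" "(a + 1, b - 1) \<in> \<mu>"
    if "is_matching (Suc n) \<mu>" "(a, b) \<in> occ21 \<mu>" for \<mu> a b
    using that matching_arc_bounds[of "Suc n" \<mu> "a + 1" "b - 1"] by (auto simp: occ21_def)
  have outer: "c + 1 < d + 1" "1 \<le> c + 1" "d + 1 \<le> 2 * n + 2"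
    if "is_matching n \<nu>" "(c, d) \<in> \<nu>" for \<nu> c d
    using matching_arc_bounds[OF that] by auto
  have "?G (?F (\<mu>, (a, b))) = (\<mu>, (a, b))"
    if "is_matching (Suc n) \<mu>" "(a, b) \<in> occ21 \<mu>" for \<mu> a b
  proof -
    have "b - 2 + 1 = b - 1" "b - 2 + 2 = b"
      using inner[OF that] by auto
    then show ?thesis
      using insert_delete_arc[OF that(1) inner(3)[OF that]] by simp
  qed
  then show "\<forall>x\<in>?X. ?G (?F x) = x"
    by auto
  show "\<forall>y\<in>?Y. ?F (?G y) = y"
    using delete_insert_arc[OF outer(1)] by auto
  have "?F (\<mu>, (a, b)) \<in> ?Y" if "is_matching (Suc n) \<mu>" "(a, b) \<in> occ21 \<mu>" for \<mu> a b
  proof -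
    have "skip_arc (a + 1) (b - 1) (a, b - 2) \<in> \<mu> - {(a + 1, b - 1)}"
      using inner[OF that] skip_arc_nested by simp
    then show ?thesis
      using matching_delete_arc[OF that(1) inner(3)[OF that]] by (simp add: delete_arc_def)
  qed
  then show "?F ` ?X \<subseteq> ?Y"
    by auto
  show "?G ` ?Y \<subseteq> ?X"
    using matching_insert_arc[OF _ outer(2,1,3)] occ21_insert_arc by auto
qed

definition a_occ :: "nat \<Rightarrow> nat \<Rightarrow> nat" where
  "a_occ n j = card {\<mu>. is_matching n \<mu> \<and> card (occ21 \<mu>) = j}"

lemma a0_eq_a_occ: "a0 n = a_occ n 0"
proof -
  have "is_matching n \<mu> \<Longrightarrow> \<not> has_endhered_21 \<mu> \<longleftrightarrow> card (occ21 \<mu>) = 0" for \<mu>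
    by (simp add: has_endhered_21_iff_occ21 finite_occ21)
  then show ?thesis
    unfolding a0_def a_occ_def by (metis (lifting))
qed

lemma card_Sigma_occ21:
  "card (SIGMA \<mu>:{\<mu>. is_matching n \<mu> \<and> card (occ21 \<mu>) = j}. occ21 \<mu>) = j * a_occ n j"
proof -
  let ?A = "{\<mu>. is_matching n \<mu> \<and> card (occ21 \<mu>) = j}"
  have "finite ?A"
    using finite_matchings[of n] by (rule finite_subset[rotated]) blast
  then have "card (SIGMA \<mu>:?A. occ21 \<mu>) = (\<Sum>\<mu>\<in>?A. card (occ21 \<mu>))"
    by (rule card_SigmaI) (auto intro: finite_occ21)
  also have "\<dots> = (\<Sum>\<mu>\<in>?A. j)"
    by (rule sum.cong) simp_all
  finally show ?thesis
    by (simp add: a_occ_def)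
qed

lemma card_Sigma_arcs:
  "card (SIGMA \<mu>:{\<mu>. is_matching n \<mu> \<and> card (occ21 \<mu>) = j}. \<mu>) = n * a_occ n j"
proof -
  let ?A = "{\<mu>. is_matching n \<mu> \<and> card (occ21 \<mu>) = j}"
  have "finite ?A"
    using finite_matchings[of n] by (rule finite_subset[rotated]) blast
  then have "card (SIGMA \<mu>:?A. \<mu>) = (\<Sum>\<mu>\<in>?A. card \<mu>)"
    by (rule card_SigmaI) (auto intro: finite_matching)
  also have "\<dots> = (\<Sum>\<mu>\<in>?A. n)"
    by (rule sum.cong) (simp_all add: card_matching)
  finally show ?thesis
    by (simp add: a_occ_def)
qed

lemma a_occ_Suc_Suc: "Suc j * a_occ (Suc n) (Suc j) = n * a_occ n j"
proof -
  let ?F = "\<lambda>(\<mu>, (a, b)). (delete_arc (a + 1) (b - 1) \<mu>, (a, b - 2))"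
  have "bij_betw ?F
      {x \<in> SIGMA \<mu>:{\<mu>. is_matching (Suc n) \<mu>}. occ21 \<mu>. card (occ21 (fst x)) = Suc j}
      {y \<in> SIGMA \<nu>:{\<nu>. is_matching n \<nu>}. \<nu>. card (occ21 (fst y)) = j}"
  proof (rule bij_betw_Collect[OF bij_betw_delete_inner_arc])
    fix x assume "x \<in> (SIGMA \<mu>:{\<mu>. is_matching (Suc n) \<mu>}. occ21 \<mu>)"
    then obtain \<mu> a b where "x = (\<mu>, (a, b))" "is_matching (Suc n) \<mu>" "(a, b) \<in> occ21 \<mu>"
      by auto
    then show "card (occ21 (fst (?F x))) = j \<longleftrightarrow> card (occ21 (fst x)) = Suc j"
      using card_occ21_delete_arc[of "Suc n" \<mu> a b] by simp
  qed
  moreover have "{x \<in> SIGMA \<mu>:{\<mu>. is_matching (Suc n) \<mu>}. occ21 \<mu>. card (occ21 (fst x)) = Suc j}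
      = (SIGMA \<mu>:{\<mu>. is_matching (Suc n) \<mu> \<and> card (occ21 \<mu>) = Suc j}. occ21 \<mu>)"
    "{y \<in> SIGMA \<nu>:{\<nu>. is_matching n \<nu>}. \<nu>. card (occ21 (fst y)) = j}
      = (SIGMA \<nu>:{\<nu>. is_matching n \<nu> \<and> card (occ21 \<nu>) = j}. \<nu>)"
    by auto
  ultimately have "bij_betw ?F (SIGMA \<mu>:{\<mu>. is_matching (Suc n) \<mu> \<and> card (occ21 \<mu>) = Suc j}. occ21 \<mu>)
      (SIGMA \<nu>:{\<nu>. is_matching n \<nu> \<and> card (occ21 \<nu>) = j}. \<nu>)"
    by simp
  then show ?thesis
    using bij_betw_same_card by (fastforce simp: card_Sigma_occ21 card_Sigma_arcs)
qed

lemma a_occ_Suc: "a_occ (Suc n) j = (n choose j) * a0 (Suc n - j)"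
proof (induction j arbitrary: n)
  case 0
  then show ?case
    by (simp add: a0_eq_a_occ)
next
  case (Suc j)
  show ?case
  proof (cases n)
    case 0
    then show ?thesis
      using a_occ_Suc_Suc[of j 0] by simp
  next
    case (Suc m)
    have "Suc j * a_occ (Suc n) (Suc j) = Suc m * ((m choose j) * a0 (Suc m - j))"
      using a_occ_Suc_Suc[of j n] Suc.IH[of m] Suc by simp
    also have "\<dots> = Suc j * ((Suc m choose Suc j) * a0 (Suc m - j))"
      using Suc_times_binomial_eq[of m j] by (metis mult.assoc mult.commute)
    finally have "a_occ (Suc n) (Suc j) = (Suc m choose Suc j) * a0 (Suc m - j)"
      by (simp only: mult_left_cancel[of "Suc j"] nat.distinct simp_thms)
    then show ?thesis
      using Suc by simp
  qed
qed

lemma dfact_eq_sum_a0: "dfact (2 * n + 1) = (\<Sum>k\<le>n. (n choose k) * a0 (Suc k))"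
proof -
  let ?C = "\<lambda>j. {\<mu>. is_matching (Suc n) \<mu> \<and> card (occ21 \<mu>) = j}"
  have "card (occ21 \<mu>) \<le> Suc n" if "is_matching (Suc n) \<mu>" for \<mu>
    using card_mono[OF finite_matching[OF that] occ21_subset] card_matching[OF that] by simp
  then have "{\<mu>. is_matching (Suc n) \<mu>} = (\<Union>j\<le>Suc n. ?C j)"
    by auto
  then have "dfact (2 * n + 1) = card (\<Union>j\<le>Suc n. ?C j)"
    using card_matchings[of n] by simp
  also have "\<dots> = (\<Sum>j\<le>Suc n. a_occ (Suc n) j)"
    unfolding a_occ_def using finite_matchings
    by (intro card_UN_disjoint) (auto intro: finite_subset[rotated])
  also have "\<dots> = (\<Sum>j\<le>n. (n choose j) * a0 (Suc n - j))"
    by (simp add: a_occ_Suc)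
  also have "\<dots> = (\<Sum>k\<le>n. (n choose k) * a0 (Suc k))"
  proof (rule sum.reindex_bij_witness[where i = "\<lambda>k. n - k" and j = "\<lambda>j. n - j"])
    fix j assume "j \<in> {..n}"
    then show "(n choose (n - j)) * a0 (Suc (n - j)) = (n choose j) * a0 (Suc n - j)"
      using binomial_symmetric[of j n] Suc_diff_le[of j n] by simp
  qed auto
  finally show ?thesis .
qed

section \<open>Binomial inversion\<close>

lemma alternating_sum_choose_mult:
  assumes "i \<le> n"
  shows "(\<Sum>k\<le>n. (-1) ^ (n - k) * of_nat (n choose k) * of_nat (k choose i)) =
    (if i = n then 1 else (0 :: 'a :: comm_ring_1))"
proof -
  have "(\<Sum>k\<le>n. (-1) ^ (n - k) * of_nat (n choose k) * of_nat (k choose i)) =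
      (\<Sum>k\<in>{i..n}. (-1) ^ (n - k) * of_nat (n choose k) * (of_nat (k choose i) :: 'a))"
    by (rule sum.mono_neutral_right) (auto simp: binomial_eq_0)
  also have "\<dots> = (\<Sum>t\<le>n - i. (-1) ^ (n - i - t) * of_nat (n choose i) * of_nat ((n - i) choose t))"
  proof (rule sum.reindex_bij_witness[where i = "\<lambda>t. t + i" and j = "\<lambda>k. k - i"])
    fix k assume "k \<in> {i..n}"
    then have "(n choose k) * (k choose i) = (n choose i) * ((n - i) choose (k - i))"
      by (simp add: choose_mult)
    then show "(-1) ^ (n - i - (k - i)) * of_nat (n choose i) * of_nat ((n - i) choose (k - i)) =
        (-1) ^ (n - k) * of_nat (n choose k) * (of_nat (k choose i) :: 'a)"
      using \<open>k \<in> {i..n}\<close> by (simp add: mult.assoc flip: of_nat_mult)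
  qed (use assms in auto)
  also have "\<dots> = of_nat (n choose i) * (\<Sum>t\<le>n - i. of_nat ((n - i) choose t) * 1 ^ t * (-1) ^ (n - i - t))"
    by (simp add: sum_distrib_left mult_ac)
  also have "\<dots> = of_nat (n choose i) * (1 + (-1)) ^ (n - i)"
    by (simp only: binomial_ring)
  also have "\<dots> = (if i = n then 1 else 0)"
    using assms by (simp add: zero_power)
  finally show ?thesis .
qed

lemma binomial_inversion:
  fixes f g :: "nat \<Rightarrow> 'a :: comm_ring_1"
  assumes "\<And>m. m \<le> n \<Longrightarrow> f m = (\<Sum>i\<le>m. of_nat (m choose i) * g i)"
  shows "g n = (\<Sum>k\<le>n. (-1) ^ (n - k) * of_nat (n choose k) * f k)"
proof -
  have "(\<Sum>k\<le>n. (-1) ^ (n - k) * of_nat (n choose k) * f k) =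
      (\<Sum>k\<le>n. \<Sum>i\<le>n. g i * ((-1) ^ (n - k) * of_nat (n choose k) * of_nat (k choose i)))"
  proof (rule sum.cong[OF refl])
    fix k assume "k \<in> {..n}"
    then have "f k = (\<Sum>i\<le>k. of_nat (k choose i) * g i)"
      using assms by simp
    also have "\<dots> = (\<Sum>i\<le>n. of_nat (k choose i) * g i)"
      using \<open>k \<in> {..n}\<close> by (intro sum.mono_neutral_left) (auto simp: binomial_eq_0)
    finally show "(-1) ^ (n - k) * of_nat (n choose k) * f k =
        (\<Sum>i\<le>n. g i * ((-1) ^ (n - k) * of_nat (n choose k) * of_nat (k choose i)))"
      by (simp add: sum_distrib_left mult_ac)
  qed
  also have "\<dots> = (\<Sum>i\<le>n. \<Sum>k\<le>n. g i * ((-1) ^ (n - k) * of_nat (n choose k) * of_nat (k choose i)))"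
    by (rule sum.swap)
  also have "\<dots> = (\<Sum>i\<le>n. g i * (\<Sum>k\<le>n. (-1) ^ (n - k) * of_nat (n choose k) * of_nat (k choose i)))"
    by (simp add: sum_distrib_left)
  also have "\<dots> = (\<Sum>i\<le>n. if i = n then g i else 0)"
    by (rule sum.cong) (simp_all add: alternating_sum_choose_mult)
  finally show ?thesis
    by simp
qed

theorem lemma3:
  fixes n :: nat
  shows "int (a0 (n+1)) =
    (\<Sum>k=0..n. (-1) ^ (n-k) * int (n choose k) * int (dfact (2*k+1)))"
proof -
  have "int (dfact (2 * m + 1)) = (\<Sum>k\<le>m. int (m choose k) * int (a0 (k + 1)))" for m
    unfolding dfact_eq_sum_a0 by simp
  then have "int (a0 (n + 1)) = (\<Sum>k\<le>n. (-1) ^ (n - k) * int (n choose k) * int (dfact (2 * k + 1)))"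
    by (rule binomial_inversion[where f = "\<lambda>k. int (dfact (2 * k + 1))" and g = "\<lambda>k. int (a0 (k + 1))"])
  then show ?thesis
    by (simp add: atLeast0AtMost)
qed

end
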